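(* Let $P$ be a finite set of points in the plane, $G$ its $\Theta_4$-graph, and $s,t\in P$ distinct. Let $u$ and $v$ be two consecutive vertices on the path $\mathcal{P}(s,t)$ followed by the routing algorithm described below from $s$ to $t$. Then $L_\infty(u,t)\ge L_\infty(v,t)$, where $L_\infty(a,b)=\max\{|a_x-b_x|,|a_y-b_y|\}$.
   Context: Cones: for a point $v=(v_x,v_y)$, let $C_0^v=\{(x,y):x\ge v_x,\ y\le v_y\}$, $C_1^v=\{x\ge v_x,\ y\ge v_y\}$, $C_2^v=\{x\le v_x,\ y\ge v_y\}$, $C_3^v=\{x\le v_x,\ y\le v_y\}$, with bisector directions $d_0=(1,-1)$, $d_1=(1,1)$, $d_2=(-1,1)$, $d_3=(-1,-1)$. The $\Theta_4$-graph of $P$ has, for each $v\in P$ and each $i$ with $(P\setminus\{v\})\cap C_i^v\neq\emptyset$, a directed edge $(v,w)$ where $w\in(P\setminus\{v\})\cap C_i^v$ minimizes $\langle w-v,d_i\rangle$ (ties broken arbitrarily); $w$ is the neighbour of $v$ in $C_i^v$. The algorithm: Let $\ell$ be the line through $t$ of slope $+1$ or $-1$ that bisects a cone $C_i^t$ containing $s$. For a vertex $v$: if $v\in\ell$, $T(v,\ell)=\{v\}$; otherwise let $H$ be the closed half-plane bounded by $\ell$ containing $v$, $C$ the cone $C_j^v$ whose bisector direction is perpendicular to $\ell$ and points from $v$ towards $\ell$, and $T(v,\ell)=C\cap H$. $v$ is clean if $T(v,\ell)$ contains no point of $P$ other than $v$. A sweeping step from $v$ goes to the neighbour of $v$ in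 $C$; a greedy step from $v$ goes to the neighbour of $v$ in the cone $C_i^v$ containing $t$. Starting from $v=s$, while $v\neq t$, the algorithm takes a sweeping step if $v$ is not clean and a greedy step otherwise. *)

theory Defs
  imports Main "HOL.Real"
begin

type_synonym pt = "real \<times> real"

definition vsub :: "pt \<Rightarrow> pt \<Rightarrow> pt" where
  "vsub a b = (fst a - fst b, snd a - snd b)"

definition dotp :: "pt \<Rightarrow> pt \<Rightarrow> real" where
  "dotp a b = fst a * fst b + snd a * snd b"

definition linf :: "pt \<Rightarrow> pt \<Rightarrow> real" where
  "linf a b = max \<bar>fst a - fst b\<bar> \<bar>snd a - snd b\<bar>"

text \<open>Cones C_0 .. C_3 at v (only indices i < 4 are meaningful).\<close>
fun cone :: "nat \<Rightarrow> pt \<Rightarrow> pt set" where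
  "cone 0 v = {p. fst p \<ge> fst v \<and> snd p \<le> snd v}"
| "cone (Suc 0) v = {p. fst p \<ge> fst v \<and> snd p \<ge> snd v}"
| "cone (Suc (Suc 0)) v = {p. fst p \<le> fst v \<and> snd p \<ge> snd v}"
| "cone _ v = {p. fst p \<le> fst v \<and> snd p \<le> snd v}"

fun bis :: "nat \<Rightarrow> pt" where
  "bis 0 = (1, -1)"
| "bis (Suc 0) = (1, 1)"
| "bis (Suc (Suc 0)) = (-1, 1)"
| "bis _ = (-1, -1)"

text \<open>nb v i is the neighbour of v in cone C_i^v in the Theta_4-graph of P
  (ties broken arbitrarily, encoded by the choice of nb).\<close>
definition theta4_nbr :: "pt set \<Rightarrow> (pt \<Rightarrow> nat \<Rightarrow> pt) \<Rightarrow> bool" where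
  "theta4_nbr P nb \<longleftrightarrow> (\<forall>v\<in>P. \<forall>i<4. (P - {v}) \<inter> cone i v \<noteq> {} \<longrightarrow>
     nb v i \<in> (P - {v}) \<inter> cone i v \<and>
     (\<forall>w\<in>(P - {v}) \<inter> cone i v. dotp (vsub (nb v i) v) (bis i) \<le> dotp (vsub w v) (bis i)))"

text \<open>The line l through t bisecting cone C_i^t (direction bis i) has normal bis ((i+1) mod 4).\<close>
definition lnormal :: "nat \<Rightarrow> pt" where
  "lnormal i = bis (Suc i mod 4)"

definition on_line :: "pt \<Rightarrow> nat \<Rightarrow> pt \<Rightarrow> bool" where
  "on_line t i p \<longleftrightarrow> dotp (vsub p t) (lnormal i) = 0"

text \<open>Index of the cone at v whose bisector is perpendicular to l and points towards l.\<close>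
definition sweep_idx :: "pt \<Rightarrow> nat \<Rightarrow> pt \<Rightarrow> nat" where
  "sweep_idx t i v = (if dotp (vsub t v) (bis (Suc i mod 4)) > 0 then Suc i mod 4 else (i + 3) mod 4)"

definition halfplane :: "pt \<Rightarrow> nat \<Rightarrow> pt \<Rightarrow> pt set" where
  "halfplane t i v = (if dotp (vsub v t) (lnormal i) \<ge> 0
      then {p. dotp (vsub p t) (lnormal i) \<ge> 0}
      else {p. dotp (vsub p t) (lnormal i) \<le> 0})"

definition Tset :: "pt \<Rightarrow> nat \<Rightarrow> pt \<Rightarrow> pt set" where
  "Tset t i v = (if on_line t i v then {v} else cone (sweep_idx t i v) v \<inter> halfplane t i v)"

definition clean :: "pt set \<Rightarrow> pt \<Rightarrow> nat \<Rightarrow> pt \<Rightarrow> bool" where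
  "clean P t i v \<longleftrightarrow> P \<inter> Tset t i v \<subseteq> {v}"

text \<open>One step of the routing algorithm from u to w (towards t, line l given by cone index i at t).
  A greedy step uses a cone of u containing t (any, if t lies on a cone boundary).\<close>
definition alg_step :: "pt set \<Rightarrow> (pt \<Rightarrow> nat \<Rightarrow> pt) \<Rightarrow> pt \<Rightarrow> nat \<Rightarrow> pt \<Rightarrow> pt \<Rightarrow> bool" where
  "alg_step P nb t i u w \<longleftrightarrow> u \<noteq> t \<and>
     (if \<not> clean P t i u then w = nb u (sweep_idx t i u)
      else (\<exists>k<4. t \<in> cone k u \<and> w = nb u k))"

end

theory Submission
  imports Defs
begin

text \<open>Every step of the algorithm goes from \<open>u\<close> to a point \<open>w\<close> of some cone \<open>C\<^sub>k\<^sup>u\<close>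
  whose projection on the bisector \<open>d\<^sub>k\<close> is at most that of \<open>t\<close>: for a greedy step \<open>t\<close> itself
  lies in the cone, so the neighbour is no farther along \<open>d\<^sub>k\<close>; for a sweeping step some point
  of \<open>T(u,\<ell>)\<close> competes, and it lies on the side of \<open>\<ell>\<close> containing \<open>u\<close>, while \<open>t\<close> lies on \<open>\<ell>\<close>.
  Such points \<open>w\<close> form the triangle cut off from the cone by the line through \<open>t\<close>
  perpendicular to \<open>d\<^sub>k\<close>, and this triangle lies in the \<open>L\<^sub>\<infinity>\<close>-ball around \<open>t\<close>
  through \<open>u\<close>.\<close>

lemma max_abs_le_of_signed_offsets:
  fixes a b c d x y e\<^sub>1 e\<^sub>2 :: real
  assumes "e\<^sub>1 = 1 \<or> e\<^sub>1 = -1" "e\<^sub>2 = 1 \<or> e\<^sub>2 = -1"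
    and "e\<^sub>1 * (c - a) \<ge> 0" "e\<^sub>2 * (d - b) \<ge> 0"
    and "e\<^sub>1 * (c - a) + e\<^sub>2 * (d - b) \<le> e\<^sub>1 * (x - a) + e\<^sub>2 * (y - b)"
  shows "max (\<bar>c - x\<bar>) (\<bar>d - y\<bar>) \<le> max (\<bar>a - x\<bar>) (\<bar>b - y\<bar>)"
  using assms by (auto simp: abs_if max_def)

lemma linf_le_if_bisector_projection_le:
  assumes "k < 4" and "w \<in> cone k u"
    and "dotp (vsub w u) (bis k) \<le> dotp (vsub t u) (bis k)"
  shows "linf w t \<le> linf u t"
proof -
  obtain a b where u: "u = (a, b)" by (cases u)
  obtain c d where w: "w = (c, d)" by (cases w)
  obtain x y where t: "t = (x, y)" by (cases t)
  note defs = u w t linf_def dotp_def vsub_def numeral_eq_Suc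
  consider "k = 0" | "k = 1" | "k = 2" | "k = 3" using \<open>k < 4\<close> by linarith
  then show ?thesis
  proof cases
    case 1
    then show ?thesis using assms max_abs_le_of_signed_offsets[of 1 "-1" c a d b x y] by (simp add: defs)
  next
    case 2
    then show ?thesis using assms max_abs_le_of_signed_offsets[of 1 1 c a d b x y] by (simp add: defs)
  next
    case 3
    then show ?thesis using assms max_abs_le_of_signed_offsets[of "-1" 1 c a d b x y] by (simp add: defs)
  next
    case 4
    then show ?thesis using assms max_abs_le_of_signed_offsets[of "-1" "-1" c a d b x y] by (simp add: defs)
  qed
qed

lemma theta4_nbr_minimal:
  assumes "theta4_nbr P nb" and "v \<in> P" and "k < 4"
    and "w \<in> P" and "w \<noteq> v" and "w \<in> cone k v"
  shows "nb v k \<in> P" and "nb v k \<in> cone k v"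
    and "dotp (vsub (nb v k) v) (bis k) \<le> dotp (vsub w v) (bis k)"
proof -
  have "w \<in> (P - {v}) \<inter> cone k v" using assms(4-6) by blast
  then show "nb v k \<in> P" "nb v k \<in> cone k v"
    "dotp (vsub (nb v k) v) (bis k) \<le> dotp (vsub w v) (bis k)"
    using assms(1-3) unfolding theta4_nbr_def by blast+
qed

lemma dotp_vsub: "dotp (vsub a b) n = dotp a n - dotp b n"
  by (simp add: dotp_def vsub_def algebra_simps)

lemma dotp_uminus_right: "dotp a (- n\<^sub>1, - n\<^sub>2) = - dotp a (n\<^sub>1, n\<^sub>2)"
  by (simp add: dotp_def)

lemma bis_opposite:
  assumes "i < 4"
  shows "bis ((i + 3) mod 4) = (- fst (bis (Suc i mod 4)), - snd (bis (Suc i mod 4)))"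
proof -
  have bis_2_3: "bis 2 = (-1, 1)" "bis 3 = (-1, -1)" by (simp_all add: numeral_2_eq_2 numeral_3_eq_3)
  consider "i = 0" | "i = 1" | "i = 2" | "i = 3" using assms by linarith
  then show ?thesis by cases (simp_all add: bis_2_3)
qed

lemma sweep_idx_less: "sweep_idx t i v < 4"
  by (simp add: sweep_idx_def)

lemma halfplane_sweep_projection_le:
  assumes "i < 4" and "p \<in> halfplane t i u"
  shows "dotp (vsub p u) (bis (sweep_idx t i u)) \<le> dotp (vsub t u) (bis (sweep_idx t i u))"
proof -
  obtain n\<^sub>1 n\<^sub>2 where n: "lnormal i = (n\<^sub>1, n\<^sub>2)" by (cases "lnormal i")
  have bis_succ: "bis (Suc i mod 4) = (n\<^sub>1, n\<^sub>2)" using n by (simp add: lnormal_def)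
  have bis_pred: "bis ((i + 3) mod 4) = (- n\<^sub>1, - n\<^sub>2)" using bis_opposite[OF \<open>i < 4\<close>] bis_succ by simp
  show ?thesis
  proof (cases "dotp (vsub t u) (bis (Suc i mod 4)) > 0")
    case True
    then have "\<not> dotp (vsub u t) (lnormal i) \<ge> 0" using bis_succ n by (simp add: dotp_vsub)
    then have "dotp (vsub p t) (lnormal i) \<le> 0" using assms(2) by (simp add: halfplane_def)
    then show ?thesis using True bis_succ n by (simp add: sweep_idx_def dotp_vsub)
  next
    case False
    then have "dotp (vsub u t) (lnormal i) \<ge> 0" using bis_succ n by (simp add: dotp_vsub)
    then have "dotp (vsub p t) (lnormal i) \<ge> 0" using assms(2) by (simp add: halfplane_def)
    then show ?thesis using False bis_succ bis_pred n by (simp add: sweep_idx_def dotp_vsub dotp_uminus_right)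
  qed
qed

lemma alg_step_bisector_projection_le:
  assumes nbr: "theta4_nbr P nb" and "i < 4" and "t \<in> P" and "u \<in> P"
    and step: "alg_step P nb t i u v"
  obtains k where "k < 4" and "v \<in> P" and "v \<in> cone k u"
    and "dotp (vsub v u) (bis k) \<le> dotp (vsub t u) (bis k)"
proof (cases "clean P t i u")
  case True
  then obtain k where k: "k < 4" "t \<in> cone k u" and v: "v = nb u k" and "u \<noteq> t"
    using step unfolding alg_step_def by auto
  show thesis
    using that[OF \<open>k < 4\<close>] theta4_nbr_minimal[OF nbr \<open>u \<in> P\<close> k(1) \<open>t \<in> P\<close> \<open>u \<noteq> t\<close>[symmetric] k(2)]
    unfolding v by blast
next
  case False
  define j where "j = sweep_idx t i u"
  have v: "v = nb u j" using step False unfolding alg_step_def j_def by auto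
  obtain p where p: "p \<in> P" "p \<in> Tset t i u" "p \<noteq> u"
    using False unfolding clean_def by auto
  then have "\<not> on_line t i u" unfolding Tset_def by auto
  then have "p \<in> cone j u" "p \<in> halfplane t i u" using p(2) unfolding Tset_def j_def by auto
  have "j < 4" by (simp add: j_def sweep_idx_less)
  note nb_min = theta4_nbr_minimal[OF nbr \<open>u \<in> P\<close> \<open>j < 4\<close> p(1,3) \<open>p \<in> cone j u\<close>]
  have "dotp (vsub p u) (bis j) \<le> dotp (vsub t u) (bis j)"
    using halfplane_sweep_projection_le[OF \<open>i < 4\<close> \<open>p \<in> halfplane t i u\<close>] by (simp add: j_def)
  then show thesis using that[OF \<open>j < 4\<close>] nb_min unfolding v by fastforce
qed

theorem lemma1:
  fixes P :: "pt set" and nb :: "pt \<Rightarrow> nat \<Rightarrow> pt" and s t u v :: pt and i :: nat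
  assumes "finite P" and "s \<in> P" and "t \<in> P" and "s \<noteq> t"
    and "theta4_nbr P nb"
    and "i < 4" and "s \<in> cone i t"
    and "(alg_step P nb t i)\<^sup>*\<^sup>* s u"
    and "alg_step P nb t i u v"
  shows "linf u t \<ge> linf v t"
proof -
  note step_facts = alg_step_bisector_projection_le[OF assms(5,6,3)]
  have "u \<in> P" using assms(8)
  proof (induction rule: rtranclp_induct)
    case base
    show ?case using \<open>s \<in> P\<close> .
  next
    case (step y z)
    then show ?case using step_facts by metis
  qed
  then show ?thesis
    using step_facts[OF _ assms(9)] linf_le_if_bisector_projection_le by metis
qed

end
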